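(* Let $\alpha,\beta\in C^\infty(\mathbb R)$ and consider $u_t=K:=uu_x+\hbar^2\alpha(u)u_x^3$. Then the formal series $$Q_\beta=\sum_{n=0}^\infty\hbar^{2n}\frac{\alpha(u)^n\beta^{(n)}(u)}{n!}u_x^{2n+1}$$ is a formal symmetry: $K'[Q_\beta]-Q_\beta'[K]=0$ order by order in $\hbar$. Its coefficients $\beta_n$ (with $Q_\beta=\sum\hbar^{2n}\beta_nu_x^{2n+1}$, $\beta_0=\beta$) are the unique solution of $n\beta_n=(1-n)\alpha'\beta_{n-1}+\alpha\beta_{n-1}'$, $n\ge1$, and $Q_\beta$ is the unique formal symmetry $\sum_{n\ge0}\hbar^{2n}Q_{2n+1}$, $Q_{2n+1}\in\mathcal D_{2n+1}$, with $Q_1=\beta(u)u_x$.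
   Context: $u_k=\partial_x^ku$; $\mathcal D=C^\infty(\mathbb R)[u_1,u_2,\dots]$ (coefficients smooth in $u$), graded by $\deg u_k=k$; $\mathcal D_k$ is the span of degree-$k$ monomials. Total derivative $D=\sum_{r\ge0}u_{r+1}\partial/\partial u_r$ ($u_0=u$); Fréchet derivative $P'[V]=\sum_{r\ge0}\frac{\partial P}{\partial u_r}D^rV$, extended coefficientwise to formal series in the formal parameter $\hbar$. A formal symmetry of $u_t=K$ is a formal series $Q$ with $K'[Q]-Q'[K]=0$. $\beta^{(n)}$ is the $n$-th derivative of $\beta$. *)

theory Defs
  imports "HOL-Analysis.Analysis" "HOL-Library.Multiset"
begin

definition C_inf :: "(real \<Rightarrow> real) \<Rightarrow> bool" where
  "C_inf f \<longleftrightarrow> (\<forall>n x. ((deriv ^^ n) f) differentiable (at x))"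

text \<open>A differential polynomial in D = C^inf(R)[u_1,u_2,...] is represented by its
  coefficient family: a monomial u_{k1}...u_{km} (all k_i \<ge> 1) is the multiset
  {#k1,...,km#}, and P M :: real \<Rightarrow> real is its coefficient (a function of u = u_0).\<close>
type_synonym dpoly = "nat multiset \<Rightarrow> real \<Rightarrow> real"

definition in_D :: "dpoly \<Rightarrow> bool" where
  "in_D P \<longleftrightarrow> finite {M. P M \<noteq> (\<lambda>_. 0)}
     \<and> (\<forall>M. P M \<noteq> (\<lambda>_. 0) \<longrightarrow> 0 \<notin># M)
     \<and> (\<forall>M. C_inf (P M))"

definition in_Dk :: "nat \<Rightarrow> dpoly \<Rightarrow> bool" where
  "in_Dk k P \<longleftrightarrow> in_D P \<and> (\<forall>M. P M \<noteq> (\<lambda>_. 0) \<longrightarrow> sum_mset M = k)"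

definition dzero :: dpoly where "dzero = (\<lambda>M x. 0)"

definition dadd :: "dpoly \<Rightarrow> dpoly \<Rightarrow> dpoly" where
  "dadd P R = (\<lambda>M x. P M x + R M x)"

definition dmonom :: "(real \<Rightarrow> real) \<Rightarrow> nat multiset \<Rightarrow> dpoly" where
  "dmonom c M = (\<lambda>N. if N = M then c else (\<lambda>_. 0))"

definition dmult :: "dpoly \<Rightarrow> dpoly \<Rightarrow> dpoly" where
  "dmult P R = (\<lambda>M x. \<Sum>A\<in>{A. A \<subseteq># M}. P A x * R (M - A) x)"

definition dpartial :: "nat \<Rightarrow> dpoly \<Rightarrow> dpoly" where
  "dpartial r P = (if r = 0 then (\<lambda>N. deriv (P N))
                   else (\<lambda>N x. real (count N r + 1) * P (N + {#r#}) x))"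

text \<open>Total derivative D = sum_r u_{r+1} d/du_r.\<close>
definition Dtot :: "dpoly \<Rightarrow> dpoly" where
  "Dtot P = (\<lambda>M x. \<Sum>s\<in>set_mset M - {0}. dpartial (s - 1) P (M - {#s#}) x)"

text \<open>Frechet derivative P'[V] = sum_r (dP/du_r) D^r V (only finitely many nonzero terms).\<close>
definition frechet :: "dpoly \<Rightarrow> dpoly \<Rightarrow> dpoly" where
  "frechet P V = (\<lambda>M x. \<Sum>r\<in>{r. dpartial r P \<noteq> dzero}. dmult (dpartial r P) ((Dtot ^^ r) V) M x)"

text \<open>Formal series in hbar: S m is the coefficient of hbar^m.\<close>
type_synonym fseries = "nat \<Rightarrow> dpoly"

text \<open>Formal symmetry Q of u_t = K: K'[Q] - Q'[K] = 0 order by order in hbar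
  (Frechet derivative extended coefficientwise).\<close>
definition formal_symmetry :: "fseries \<Rightarrow> fseries \<Rightarrow> bool" where
  "formal_symmetry K Q \<longleftrightarrow>
     (\<forall>m M x. (\<Sum>i\<le>m. frechet (K i) (Q (m - i)) M x) = (\<Sum>i\<le>m. frechet (Q (m - i)) (K i) M x))"

definition KK :: "(real \<Rightarrow> real) \<Rightarrow> fseries" where
  "KK a = (\<lambda>m. if m = 0 then dmonom (\<lambda>x. x) {#1#}
               else if m = 2 then dmonom a (replicate_mset 3 1)
               else dzero)"

definition Qb :: "(real \<Rightarrow> real) \<Rightarrow> (real \<Rightarrow> real) \<Rightarrow> fseries" where
  "Qb a b = (\<lambda>m. if even m then
        dmonom (\<lambda>x. a x ^ (m div 2) * (deriv ^^ (m div 2)) b x / fact (m div 2))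
               (replicate_mset (2 * (m div 2) + 1) 1)
      else dzero)"

end

(*
  Write [P, R] = P'[R] - R'[P] and Q_m for the coefficient of hbar^m in Q; the symmetry
  condition at order hbar^m then reads [u u_x, Q_m] + [a(u) u_x^3, Q_(m-2)] = 0. On
  monomials in u_x alone the bracket is
  [c(u) u_x^j, q(u) u_x^k] = ((1 - k) c' q + (j - 1) c q') u_x^(j+k), so for
  Q_(2n) = beta_n u_x^(2n+1) the condition at order hbar^(2n) is exactly the recurrence
  n beta_n = (1 - n) a' beta_(n-1) + a beta_(n-1)', which a^n beta^(n) / n! solves.

  Uniqueness rests on the injectivity of P |-> [u u_x, P] on differential polynomials whose
  monomials are free of u and have degree at least 2. If M0 is a monomial of P with the
  largest power of u_x, the coefficient of u_x M0 in [u u_x, P] is (1 - sum_k c_k) P_M0,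
  the sum running over the factors u_k of M0, where c_k >= k is the coefficient of u_1 u_k
  in D^k (u u_x); so the sum is at least the degree of M0, hence at least 2. Two such
  symmetries with the same Q_0 therefore agree order by order.
*)
theory Submission
  imports Defs
begin

abbreviation ux_monom :: "(real \<Rightarrow> real) \<Rightarrow> nat \<Rightarrow> dpoly" where
  "ux_monom c k \<equiv> dmonom c (replicate_mset k 1)"

abbreviation uux :: dpoly where
  "uux \<equiv> ux_monom (\<lambda>u. u) 1"

section \<open>Calculus of differential polynomials\<close>

lemma finite_submultisets: "finite {A. A \<subseteq># (N::'a multiset)}"
proof (induction N)
  case (add x N)
  have "A \<in> {A. A \<subseteq># N} \<union> add_mset x ` {A. A \<subseteq># N}" if "A \<subseteq># add_mset x N" for A
  proof (cases "x \<in># A")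
    case True
    then have "A = add_mset x (A - {#x#})" by simp
    moreover from this have "A - {#x#} \<subseteq># N"
      using that by (metis mset_subset_eq_add_mset_cancel)
    ultimately show ?thesis by blast
  next
    case False
    then have "A \<subseteq># N"
      using that by (metis inter_add_right1 subset_mset.inf.orderE subset_mset.inf.orderI)
    then show ?thesis by blast
  qed
  then have "{A. A \<subseteq># add_mset x N} \<subseteq> {A. A \<subseteq># N} \<union> add_mset x ` {A. A \<subseteq># N}"
    by blast
  then show ?case
    by (rule finite_subset) (use add in simp)
qed simp

lemma replicate_mset_add: "replicate_mset m a + replicate_mset n a = replicate_mset (m + n) a"
  by (induction m) auto

lemma add_mset_eq_replicate_mset_iff:
  "add_mset a N = replicate_mset k b \<longleftrightarrow> 1 \<le> k \<and> a = b \<and> N = replicate_mset (k - 1) b"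
proof (cases k)
  case (Suc n)
  have "a = b" if "add_mset a N = add_mset b (replicate_mset n b)"
    using union_single_eq_member[OF that] by (auto split: if_splits)
  then show ?thesis using Suc by auto
qed simp

lemma subset_mset_diff_eq_iff: "A \<subseteq># N \<Longrightarrow> N - A = M \<longleftrightarrow> N = A + M"
  by (metis subset_mset.add_diff_inverse add_diff_cancel_left')

lemma multiset_size_2E:
  assumes "size M = 2"
  obtains j l where "M = {#j, l#}"
proof -
  obtain j M' where "M = add_mset j M'" "size M' = 1"
    using size_eq_Suc_imp_eq_union[of M 1] assms by auto
  moreover obtain l where "M' = {#l#}"
    using size_1_singleton_mset[OF \<open>size M' = 1\<close>] by blast
  ultimately show thesis
    using that by blast
qed

lemma sum_atMost_count_eq_sum_mset:
  fixes g :: "nat \<Rightarrow> real"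
  shows "set_mset M \<subseteq> {..B} \<Longrightarrow> (\<Sum>r\<le>B. real (count M r) * g r) = (\<Sum>k\<in>#M. g k)"
proof (induction M)
  case (add k M)
  have "(\<Sum>r\<le>B. real (count (add_mset k M) r) * g r)
      = (\<Sum>r\<le>B. real (count M r) * g r + (if r = k then g r else 0))"
    by (rule sum.cong) (auto simp: distrib_right)
  also have "\<dots> = (\<Sum>r\<le>B. real (count M r) * g r) + g k"
    using add.prems by (simp add: sum.distrib)
  finally show ?case
    using add by simp
qed simp

lemma dmult_dmonom_left:
  "dmult (dmonom c A) R N x = (if A \<subseteq># N then c x * R (N - A) x else 0)"
proof -
  have "dmult (dmonom c A) R N x = (\<Sum>A'\<in>{A'. A' \<subseteq># N}. if A' = A then c x * R (N - A') x else 0)"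
    unfolding dmult_def dmonom_def by (rule sum.cong) auto
  then show ?thesis
    using finite_submultisets[of N] by simp
qed

lemma dmult_dzero_left [simp]: "dmult dzero R N x = 0"
  unfolding dmult_def dzero_def by simp

lemma dmult_diff_left: "dmult (\<lambda>N x. P1 N x - P2 N x) R N x = dmult P1 R N x - dmult P2 R N x"
  unfolding dmult_def by (simp add: left_diff_distrib sum_subtractf)

lemma dpartial_0: "dpartial 0 P N x = deriv (P N) x"
  unfolding dpartial_def by simp

lemma dpartial_pos: "1 \<le> r \<Longrightarrow> dpartial r P N x = real (count N r + 1) * P (add_mset r N) x"
  unfolding dpartial_def by simp

lemma dpartial_dzero [simp]: "dpartial r dzero = dzero"
  unfolding dpartial_def dzero_def by (auto intro!: ext)

lemma dpartial_0_dmonom: "dpartial 0 (dmonom c M) = dmonom (deriv c) M"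
  unfolding dpartial_def dmonom_def by (auto intro!: ext)

lemma dpartial_1_ux_monom:
  "1 \<le> k \<Longrightarrow> dpartial 1 (ux_monom c k) = ux_monom (\<lambda>u. real k * c u) (k - 1)"
  unfolding dpartial_def dmonom_def by (auto intro!: ext simp: add_mset_eq_replicate_mset_iff)

lemma dpartial_ux_monom_eq_dzero: "2 \<le> r \<Longrightarrow> dpartial r (ux_monom c k) = dzero"
  unfolding dpartial_def dmonom_def dzero_def
  by (auto intro!: ext simp: add_mset_eq_replicate_mset_iff)

lemma dpartial_eventually_dzero:
  assumes "finite {M. P M \<noteq> (\<lambda>_. 0)}"
  obtains B where "\<And>r. B < r \<Longrightarrow> dpartial r P = dzero"
proof
  define U where "U = insert 0 (\<Union>M\<in>{M. P M \<noteq> (\<lambda>_. 0)}. set_mset M)"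
  have "finite U" using assms unfolding U_def by auto
  fix r assume r: "Max U < r"
  have "P (add_mset r N) = (\<lambda>_. 0)" for N
  proof (rule ccontr)
    assume "P (add_mset r N) \<noteq> (\<lambda>_. 0)"
    then have "r \<in> U" unfolding U_def by auto
    with \<open>finite U\<close> r show False by (simp add: leD)
  qed
  moreover have "r \<noteq> 0" using r by simp
  ultimately show "dpartial r P = dzero" by (auto intro!: ext simp: dpartial_def dzero_def)
qed

lemma dpartial_diff:
  assumes "\<And>N x. P1 N differentiable at x" "\<And>N x. P2 N differentiable at x"
  shows "dpartial r (\<lambda>N x. P1 N x - P2 N x) = (\<lambda>N x. dpartial r P1 N x - dpartial r P2 N x)"
proof -
  have "P1 N field_differentiable at x" "P2 N field_differentiable at x" for N x
    using assms by (simp_all flip: DERIV_deriv_iff_field_differentiable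
        add: DERIV_deriv_iff_real_differentiable)
  then show ?thesis
    unfolding dpartial_def by (auto intro!: ext simp: right_diff_distrib)
qed

lemma Dtot_eq: "Dtot P N x = (\<Sum>s\<in>set_mset N - {0}. dpartial (s - 1) P (N - {#s#}) x)"
  unfolding Dtot_def ..

lemma Dtot_eq_sum_atMost:
  assumes "\<forall>s\<in>#N. s \<le> Suc B"
  shows "Dtot P N x = (\<Sum>r\<le>B. if Suc r \<in># N then dpartial r P (N - {#Suc r#}) x else 0)"
proof -
  have "s \<in> Suc ` {r \<in> {..B}. Suc r \<in># N}" if "s \<in># N" "s \<noteq> 0" for s
    using that assms by (intro image_eqI[of s Suc "s - 1"]) auto
  then have "set_mset N - {0} = Suc ` {r \<in> {..B}. Suc r \<in># N}"
    by auto
  then have "Dtot P N x = (\<Sum>r\<in>{r \<in> {..B}. Suc r \<in># N}. dpartial r P (N - {#Suc r#}) x)"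
    by (simp add: Dtot_eq sum.reindex)
  then show ?thesis
    by (simp only: sum.inter_filter[OF finite_atMost])
qed

lemma Dtot_dzero [simp]: "Dtot dzero = dzero"
  unfolding Dtot_def by simp (simp add: dzero_def)

lemma Dtot_power_dzero [simp]: "(Dtot ^^ r) dzero = dzero"
  by (induction r) simp_all

lemma Dtot_diff:
  assumes "\<And>N x. P1 N differentiable at x" "\<And>N x. P2 N differentiable at x"
  shows "Dtot (\<lambda>N x. P1 N x - P2 N x) N x = Dtot P1 N x - Dtot P2 N x"
  unfolding Dtot_eq dpartial_diff[OF assms] by (simp add: sum_subtractf)

lemma sum_supported_on_1_2:
  fixes f :: "nat \<Rightarrow> real"
  assumes "finite S" "\<And>s. s \<in> S \<Longrightarrow> s \<noteq> 1 \<Longrightarrow> s \<noteq> 2 \<Longrightarrow> f s = 0"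
  shows "sum f S = (if 1 \<in> S then f 1 else 0) + (if 2 \<in> S then f 2 else 0)"
proof -
  have "sum f S = sum f (S \<inter> {1,2})"
    using assms by (intro sum.mono_neutral_right) auto
  then show ?thesis
    by (cases "1 \<in> S"; cases "2 \<in> S") (auto simp: Int_insert_right)
qed

lemma Dtot_ux_monom:
  assumes "1 \<le> k"
  shows "Dtot (ux_monom c k) N x =
     (if N = replicate_mset (Suc k) 1 then deriv c x else 0)
   + (if N = add_mset 2 (replicate_mset (k - 1) 1) then real k * c x else 0)"
proof -
  have picked: "(if s \<in> set_mset N - {0} then dmonom d X (N - {#s#}) x else 0)
      = (if N = add_mset s X then d x else 0)" if "s \<noteq> 0" for s X d
    using that by (auto simp: dmonom_def insert_DiffM)
  have "Dtot (ux_monom c k) N x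
      = (if 1 \<in> set_mset N - {0} then dpartial (1 - 1) (ux_monom c k) (N - {#1#}) x else 0)
      + (if 2 \<in> set_mset N - {0} then dpartial (2 - 1) (ux_monom c k) (N - {#2#}) x else 0)"
    unfolding Dtot_eq
  proof (rule sum_supported_on_1_2)
    fix s assume "s \<in> set_mset N - {0}" "s \<noteq> 1" "s \<noteq> 2"
    then have "dpartial (s - 1) (ux_monom c k) = dzero"
      by (intro dpartial_ux_monom_eq_dzero) auto
    then show "dpartial (s - 1) (ux_monom c k) (N - {#s#}) x = 0"
      by (simp add: dzero_def)
  qed simp
  also have "\<dots> = (if 1 \<in> set_mset N - {0}
        then dmonom (deriv c) (replicate_mset k 1) (N - {#1#}) x else 0)
      + (if 2 \<in> set_mset N - {0} then ux_monom (\<lambda>u. real k * c u) (k - 1) (N - {#2#}) x else 0)"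
    using dpartial_0_dmonom dpartial_1_ux_monom[OF assms] by simp
  also have "\<dots> = (if N = replicate_mset (Suc k) 1 then deriv c x else 0)
   + (if N = add_mset 2 (replicate_mset (k - 1) 1) then real k * c x else 0)"
    by (simp only: picked zero_neq_one zero_neq_numeral not_False_eq_True replicate_mset_Suc)
  finally show ?thesis .
qed

lemma frechet_eq_sum_atMost:
  assumes "\<And>r. B < r \<Longrightarrow> dpartial r P = dzero"
  shows "frechet P V N x = (\<Sum>r\<le>B. dmult (dpartial r P) ((Dtot ^^ r) V) N x)"
  unfolding frechet_def
  by (rule sum.mono_neutral_left) (use assms in \<open>auto simp: not_less[symmetric]\<close>)

lemma frechet_dzero_left [simp]: "frechet dzero V N x = 0"
  by (subst frechet_eq_sum_atMost[of 0]) simp_all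

lemma frechet_dzero_right [simp]: "frechet P dzero N x = 0"
  unfolding frechet_def Dtot_power_dzero by (simp add: dmult_def dzero_def)

lemma frechet_diff_left:
  assumes "\<And>N x. P1 N differentiable at x" "\<And>N x. P2 N differentiable at x"
    and "\<And>r. B < r \<Longrightarrow> dpartial r P1 = dzero" "\<And>r. B < r \<Longrightarrow> dpartial r P2 = dzero"
  shows "frechet (\<lambda>N x. P1 N x - P2 N x) V N x = frechet P1 V N x - frechet P2 V N x"
proof -
  have "dpartial r (\<lambda>N x. P1 N x - P2 N x) = dzero" if "B < r" for r
    using assms(3,4)[OF that] unfolding dpartial_diff[OF assms(1,2)] by (simp add: dzero_def)
  then show ?thesis
    by (simp add: frechet_eq_sum_atMost[of B] assms(3,4) dpartial_diff[OF assms(1,2)]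
        dmult_diff_left sum_subtractf)
qed

lemma frechet_ux_monom:
  assumes "1 \<le> k"
  shows "frechet (ux_monom c k) V N x =
     (if replicate_mset k 1 \<subseteq># N then deriv c x * V (N - replicate_mset k 1) x else 0)
   + (if replicate_mset (k - 1) 1 \<subseteq># N
      then real k * c x * Dtot V (N - replicate_mset (k - 1) 1) x else 0)"
proof -
  have "frechet (ux_monom c k) V N x
      = (\<Sum>r\<le>1. dmult (dpartial r (ux_monom c k)) ((Dtot ^^ r) V) N x)"
    by (rule frechet_eq_sum_atMost) (rule dpartial_ux_monom_eq_dzero, simp)
  also have "\<dots> = dmult (dpartial 0 (ux_monom c k)) V N x
      + dmult (dpartial 1 (ux_monom c k)) (Dtot V) N x"
    by (simp add: atMost_Suc)
  finally show ?thesis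
    using assms by (simp add: dpartial_0_dmonom dpartial_1_ux_monom[simplified] dmult_dmonom_left)
qed

lemma frechet_uux_left:
  "frechet uux V N x = (if 1 \<in># N then V (N - {#1#}) x else 0) + x * Dtot V N x"
  using frechet_ux_monom[of 1 "\<lambda>u. u" V N x] by simp

section \<open>Brackets of monomials in u_x\<close>

lemma frechet_ux_monom_ux_monom:
  assumes "1 \<le> j" "1 \<le> k"
  shows "frechet (ux_monom c j) (ux_monom q k) N x =
      (if N = replicate_mset (j + k) 1 then deriv c x * q x + real j * c x * deriv q x else 0)
    + (if N = add_mset 2 (replicate_mset (j + k - 2) 1) then real j * real k * c x * q x else 0)"
proof -
  have sum1: "replicate_mset (j - 1) 1 + replicate_mset (Suc k) 1 = replicate_mset (j + k) (1::nat)"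
    using assms(1) by (cases j) (simp_all add: replicate_mset_add)
  have sum2: "replicate_mset (j - 1) 1 + add_mset 2 (replicate_mset (k - 1) 1)
      = add_mset 2 (replicate_mset (j + k - 2) (1::nat))"
    using assms by (cases j; cases k) (simp_all add: replicate_mset_add)
  have term0: "(if replicate_mset j 1 \<subseteq># N
        then deriv c x * ux_monom q k (N - replicate_mset j 1) x else 0)
      = (if N = replicate_mset (j + k) 1 then deriv c x * q x else 0)"
  proof (cases "replicate_mset j 1 \<subseteq># N")
    case True
    then show ?thesis by (simp add: dmonom_def subset_mset_diff_eq_iff replicate_mset_add)
  next
    case False
    then have "N \<noteq> replicate_mset (j + k) 1"
      by (metis replicate_mset_add subset_mset.add_diff_inverse subset_mset.le_add_same_cancel1
          subset_mset.zero_le)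
    with False show ?thesis by simp
  qed
  have term1: "(if replicate_mset (j - 1) 1 \<subseteq># N
      then real j * c x * Dtot (ux_monom q k) (N - replicate_mset (j - 1) 1) x else 0)
    = (if N = replicate_mset (j + k) 1 then real j * c x * deriv q x else 0)
    + (if N = add_mset 2 (replicate_mset (j + k - 2) 1) then real j * real k * c x * q x else 0)"
  proof (cases "replicate_mset (j - 1) 1 \<subseteq># N")
    case True
    have "N - replicate_mset (j - 1) 1 = replicate_mset (Suc k) 1 \<longleftrightarrow> N = replicate_mset (j + k) 1"
      "N - replicate_mset (j - 1) 1 = add_mset 2 (replicate_mset (k - 1) 1)
        \<longleftrightarrow> N = add_mset 2 (replicate_mset (j + k - 2) 1)"
      by (simp_all only: subset_mset_diff_eq_iff[OF True] sum1 sum2)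
    then show ?thesis
      using True by (simp only: Dtot_ux_monom[OF assms(2)] if_True) (simp add: distrib_left)
  next
    case False
    then have "N \<noteq> replicate_mset (j + k) 1" "N \<noteq> add_mset 2 (replicate_mset (j + k - 2) 1)"
      unfolding sum1[symmetric] sum2[symmetric] by auto
    with False show ?thesis by simp
  qed
  show ?thesis
    unfolding frechet_ux_monom[OF assms(1)] term0 term1 by simp
qed

definition lie_bracket :: "dpoly \<Rightarrow> dpoly \<Rightarrow> dpoly" where
  "lie_bracket P R = (\<lambda>N x. frechet P R N x - frechet R P N x)"

lemma lie_bracket_ux_monom:
  assumes "1 \<le> j" "1 \<le> k"
  shows "lie_bracket (ux_monom c j) (ux_monom q k) N x =
    (if N = replicate_mset (j + k) 1
     then (1 - real k) * deriv c x * q x + (real j - 1) * c x * deriv q x else 0)"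
  unfolding lie_bracket_def frechet_ux_monom_ux_monom[OF assms]
    frechet_ux_monom_ux_monom[OF assms(2,1)]
  by (simp add: add.commute[of k j] algebra_simps)

lemma lie_bracket_dzero_right [simp]: "lie_bracket P dzero N x = 0"
  by (simp add: lie_bracket_def)

lemma formal_symmetry_KK_iff:
  "formal_symmetry (KK a) Q \<longleftrightarrow>
    (\<forall>m N x. lie_bracket uux (Q m) N x
      + (if 2 \<le> m then lie_bracket (ux_monom a 3) (Q (m - 2)) N x else 0) = 0)"
proof -
  have sum_0_2: "(\<Sum>i\<le>m. f i) = f 0 + (if 2 \<le> m then f 2 else 0)"
    if "\<And>i. i \<noteq> 0 \<Longrightarrow> i \<noteq> 2 \<Longrightarrow> f i = 0" for m and f :: "nat \<Rightarrow> real"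
  proof -
    have "(\<Sum>i\<le>m. f i) = (\<Sum>i\<in>{..m} \<inter> {0,2}. f i)"
      using that by (intro sum.mono_neutral_right) auto
    moreover have "{..m} \<inter> {0,2} = (if 2 \<le> m then {0,2} else {0})"
      by auto
    ultimately show ?thesis by simp
  qed
  have KK: "KK a 0 = uux" "KK a 2 = ux_monom a 3" "i \<noteq> 0 \<Longrightarrow> i \<noteq> 2 \<Longrightarrow> KK a i = dzero" for i
    unfolding KK_def by simp_all
  have "((\<Sum>i\<le>m. frechet (KK a i) (Q (m - i)) N x) = (\<Sum>i\<le>m. frechet (Q (m - i)) (KK a i) N x))
    \<longleftrightarrow> lie_bracket uux (Q m) N x
      + (if 2 \<le> m then lie_bracket (ux_monom a 3) (Q (m - 2)) N x else 0) = 0" for m N x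
  proof -
    have "(\<Sum>i\<le>m. frechet (KK a i) (Q (m - i)) N x)
      = frechet uux (Q m) N x + (if 2 \<le> m then frechet (ux_monom a 3) (Q (m - 2)) N x else 0)"
      "(\<Sum>i\<le>m. frechet (Q (m - i)) (KK a i) N x)
      = frechet (Q m) uux N x + (if 2 \<le> m then frechet (Q (m - 2)) (ux_monom a 3) N x else 0)"
      by (subst sum_0_2, simp add: KK, simp add: KK)+
    then show ?thesis
      unfolding lie_bracket_def by auto
  qed
  then show ?thesis
    unfolding formal_symmetry_def by simp
qed

section \<open>Existence\<close>

lemma C_inf_differentiable: "C_inf f \<Longrightarrow> (deriv ^^ n) f differentiable (at x)"
  unfolding C_inf_def by blast

definition symmetry_coeff :: "(real \<Rightarrow> real) \<Rightarrow> (real \<Rightarrow> real) \<Rightarrow> nat \<Rightarrow> real \<Rightarrow> real" where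
  "symmetry_coeff a b n = (\<lambda>u. a u ^ n * (deriv ^^ n) b u / fact n)"

lemma Qb_even: "Qb a b (2 * n) = ux_monom (symmetry_coeff a b n) (2 * n + 1)"
  unfolding Qb_def symmetry_coeff_def by simp

lemma Qb_odd: "odd m \<Longrightarrow> Qb a b m = dzero"
  unfolding Qb_def by simp

lemma has_real_derivative_symmetry_coeff:
  assumes "a differentiable at x" "(deriv ^^ n) b differentiable at x"
  shows "(symmetry_coeff a b n has_real_derivative
      (real n * a x ^ (n - 1) * deriv a x * (deriv ^^ n) b x
        + a x ^ n * (deriv ^^ Suc n) b x) / fact n) (at x)"
proof -
  note assms[folded DERIV_deriv_iff_real_differentiable]
  then show ?thesis
    unfolding symmetry_coeff_def by (auto intro!: derivative_eq_intros)
qed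

lemma symmetry_coeff_recurrence:
  assumes "a differentiable at x" "(deriv ^^ n) b differentiable at x"
  shows "real (Suc n) * symmetry_coeff a b (Suc n) x
    = (1 - real (Suc n)) * deriv a x * symmetry_coeff a b n x + a x * deriv (symmetry_coeff a b n) x"
proof -
  have dq: "deriv (symmetry_coeff a b n) x = (real n * a x ^ (n - 1) * deriv a x * (deriv ^^ n) b x
      + a x ^ n * (deriv ^^ Suc n) b x) / fact n"
    by (rule DERIV_imp_deriv[OF has_real_derivative_symmetry_coeff[OF assms]])
  have "a x * (real n * a x ^ (n - 1)) = real n * a x ^ n"
    by (cases n) auto
  then have "a x * deriv (symmetry_coeff a b n) x
    = (real n * a x ^ n * deriv a x * (deriv ^^ n) b x + a x ^ Suc n * (deriv ^^ Suc n) b x) / fact n"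
    unfolding dq by (simp add: field_simps) blast
  moreover have "(0::real) < fact n + fact n * real n"
    by (intro add_pos_nonneg) auto
  ultimately show ?thesis
    unfolding symmetry_coeff_def by (simp add: field_simps)
qed

lemma C_inf_symmetry_coeff_recurrence:
  assumes "C_inf a" "C_inf b"
  shows "real (Suc n) * symmetry_coeff a b (Suc n) x
    = (1 - real (Suc n)) * deriv a x * symmetry_coeff a b n x + a x * deriv (symmetry_coeff a b n) x"
  using C_inf_differentiable[OF assms(1), of 0] C_inf_differentiable[OF assms(2)]
  by (intro symmetry_coeff_recurrence) simp_all

lemma formal_symmetry_Qb:
  assumes "C_inf a" "C_inf b"
  shows "formal_symmetry (KK a) (Qb a b)"
  unfolding formal_symmetry_KK_iff
proof (intro allI)
  fix m N x
  let ?c = "symmetry_coeff a b"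
  consider "m = 0" | n where "m = Suc (2 * n)" | r where "m = 2 * Suc r"
    by (metis evenE oddE not0_implies_Suc mult_0_right Suc_eq_plus1)
  then show "lie_bracket uux (Qb a b m) N x
    + (if 2 \<le> m then lie_bracket (ux_monom a 3) (Qb a b (m - 2)) N x else 0) = 0"
  proof cases
    case 1
    then show ?thesis
      using Qb_even[of a b 0] lie_bracket_ux_monom[of 1 1 "\<lambda>u. u" "?c 0" N x] by simp
  next
    case (2 n)
    then show ?thesis
      by (cases n) (simp_all add: Qb_odd)
  next
    case (3 r)
    have degrees: "1 + (2 * Suc r + 1) = 2 * r + 4" "3 + (2 * r + 1) = 2 * r + 4"
      by simp_all
    have "m - 2 = 2 * r"
      using 3 by simp
    then have "Qb a b m = ux_monom (?c (Suc r)) (2 * Suc r + 1)"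
      "Qb a b (m - 2) = ux_monom (?c r) (2 * r + 1)"
      unfolding 3 by (simp_all only: Qb_even)
    moreover have "lie_bracket uux (ux_monom (?c (Suc r)) (2 * Suc r + 1)) N x
        = (if N = replicate_mset (2 * r + 4) 1
           then (1 - real (2 * Suc r + 1)) * deriv (\<lambda>u. u) x * ?c (Suc r) x
             + (real 1 - 1) * x * deriv (?c (Suc r)) x else 0)"
      by (rule lie_bracket_ux_monom[of 1 "2 * Suc r + 1", unfolded degrees]) simp_all
    moreover have "lie_bracket (ux_monom a 3) (ux_monom (?c r) (2 * r + 1)) N x
        = (if N = replicate_mset (2 * r + 4) 1
           then (1 - real (2 * r + 1)) * deriv a x * ?c r x
             + (real 3 - 1) * a x * deriv (?c r) x else 0)"
      by (rule lie_bracket_ux_monom[of 3 "2 * r + 1", unfolded degrees]) simp_all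
    moreover have "2 \<le> m"
      using 3 by simp
    ultimately show ?thesis
      using C_inf_symmetry_coeff_recurrence[OF assms, of r x] DERIV_imp_deriv[OF DERIV_ident]
      by (simp add: algebra_simps)
  qed
qed

lemma symmetry_coeff_unique_solution:
  assumes "C_inf a" "C_inf b"
  shows "(c 0 = b \<and> (\<forall>n\<ge>1. \<forall>x. real n * c n x
      = (1 - real n) * deriv a x * c (n - 1) x + a x * deriv (c (n - 1)) x))
    \<longleftrightarrow> c = symmetry_coeff a b"
proof -
  note rec = C_inf_symmetry_coeff_recurrence[OF assms]
  have init: "symmetry_coeff a b 0 = b"
    by (simp add: symmetry_coeff_def)
  show ?thesis
  proof
    assume c: "c 0 = b \<and> (\<forall>n\<ge>1. \<forall>x. real n * c n x
      = (1 - real n) * deriv a x * c (n - 1) x + a x * deriv (c (n - 1)) x)"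
    have "c n = symmetry_coeff a b n" for n
    proof (induction n)
      case (Suc n)
      have "real (Suc n) * c (Suc n) x = real (Suc n) * symmetry_coeff a b (Suc n) x" for x
      proof -
        have "real (Suc n) * c (Suc n) x
            = (1 - real (Suc n)) * deriv a x * c n x + a x * deriv (c n) x"
          using c[THEN conjunct2, rule_format, of "Suc n" x] by simp
        then show ?thesis
          using rec[of n x] Suc.IH by simp
      qed
      then show ?case
        by (intro ext) (metis mult_cancel_left of_nat_eq_0_iff nat.distinct(1))
    qed (use c init in simp)
    then show "c = symmetry_coeff a b" ..
  next
    assume "c = symmetry_coeff a b"
    then show "c 0 = b \<and> (\<forall>n\<ge>1. \<forall>x. real n * c n x
      = (1 - real n) * deriv a x * c (n - 1) x + a x * deriv (c (n - 1)) x)"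
      using init rec by (auto dest!: Suc_le_D)
  qed
qed

section \<open>Injectivity of the bracket with u u_x\<close>

(* The coefficient of u_1 u_r in D^r (u u_x) = u u_(r+1) + sum_(j=1..r) C(r,j) u_j u_(r+1-j):
   the terms j = 1 and j = r contribute r and 1, and they coincide when r = 1. *)
definition pair_coeff :: "nat \<Rightarrow> real" where
  "pair_coeff r = (if r = 1 then 1 else real r + 1)"

(* What the injectivity argument needs to know about D^r (u u_x). *)
definition uux_derivative_shape :: "nat \<Rightarrow> dpoly \<Rightarrow> bool" where
  "uux_derivative_shape r T \<longleftrightarrow>
     T {#Suc r#} = (\<lambda>u. u)
   \<and> (\<forall>B x y. size B = 2 \<longrightarrow> T B x = T B y)
   \<and> (\<forall>B x. T B x \<noteq> 0 \<longrightarrow> B = {#Suc r#} \<or> (size B = 2 \<and> sum_mset B = Suc r \<and> 0 \<notin># B))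
   \<and> (1 \<le> r \<longrightarrow> (\<forall>x. T {#1, r#} x = pair_coeff r))"

lemma deriv_uux_derivative_shape:
  assumes "uux_derivative_shape r T"
  shows "deriv (T B) x = (if B = {#Suc r#} then 1 else 0)"
proof (cases "size B = 2")
  case True
  then have "T B = (\<lambda>_. T B 0)"
    using assms unfolding uux_derivative_shape_def by (auto intro!: ext)
  moreover have "B \<noteq> {#Suc r#}"
    using True by auto
  ultimately show ?thesis
    by (metis deriv_const)
next
  case False
  show ?thesis
  proof (cases "B = {#Suc r#}")
    case True
    then show ?thesis
      using assms DERIV_imp_deriv[OF DERIV_ident] by (simp add: uux_derivative_shape_def)
  next
    case False
    with \<open>size B \<noteq> 2\<close> have "T B = (\<lambda>_. 0)"
      using assms unfolding uux_derivative_shape_def by (auto intro!: ext)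
    with False show ?thesis by simp
  qed
qed

lemma uux_derivative_shape_Dtot_top:
  assumes "uux_derivative_shape r T"
  shows "Dtot T {#Suc (Suc r)#} = (\<lambda>u. u)"
  using assms by (auto intro!: ext simp: Dtot_eq dpartial_pos uux_derivative_shape_def)

lemma uux_derivative_shape_Dtot_const:
  assumes "uux_derivative_shape r T" "size B = 2"
  shows "Dtot T B x = Dtot T B y"
  unfolding Dtot_eq
proof (rule sum.cong[OF refl])
  fix s assume s: "s \<in> set_mset B - {0}"
  show "dpartial (s - 1) T (B - {#s#}) x = dpartial (s - 1) T (B - {#s#}) y"
  proof (cases "s = 1")
    case True
    then show ?thesis
      by (simp add: dpartial_0 deriv_uux_derivative_shape[OF assms(1)])
  next
    case False
    then have "1 \<le> s - 1"
      using s by auto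
    moreover have "size (add_mset (s - 1) (B - {#s#})) = 2"
      using s assms(2) by (simp add: size_Diff_singleton)
    moreover have "\<And>B x y. size B = 2 \<Longrightarrow> T B x = T B y"
      using assms(1) unfolding uux_derivative_shape_def by blast
    ultimately show ?thesis
      by (simp add: dpartial_pos)
  qed
qed

lemma uux_derivative_shape_Dtot_support:
  assumes "uux_derivative_shape r T" "Dtot T B x \<noteq> 0"
  shows "B = {#Suc (Suc r)#} \<or> (size B = 2 \<and> sum_mset B = Suc (Suc r) \<and> 0 \<notin># B)"
proof -
  obtain s where "s \<in> set_mset B - {0}" and nonzero: "dpartial (s - 1) T (B - {#s#}) x \<noteq> 0"
    using sum.not_neutral_contains_not_neutral[OF assms(2)[unfolded Dtot_eq]] by blast
  then have s: "s \<in># B" "s \<noteq> 0"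
    by auto
  define B' where "B' = B - {#s#}"
  have B: "B = add_mset s B'"
    unfolding B'_def using s by simp
  show ?thesis
  proof (cases "s = 1")
    case True
    then have "B' = {#Suc r#}"
      using nonzero
      by (simp add: B'_def dpartial_0 deriv_uux_derivative_shape[OF assms(1)] split: if_splits)
    then show ?thesis
      using B True by simp
  next
    case False
    then have "T (add_mset (s - 1) B') x \<noteq> 0"
      using nonzero s by (simp add: B'_def dpartial_pos)
    then have "add_mset (s - 1) B' = {#Suc r#}
        \<or> (size (add_mset (s - 1) B') = 2 \<and> sum_mset (add_mset (s - 1) B') = Suc r
          \<and> 0 \<notin># add_mset (s - 1) B')"
      using assms(1) unfolding uux_derivative_shape_def by blast
    then show ?thesis
    proof
      assume "add_mset (s - 1) B' = {#Suc r#}"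
      then have "B' = {#}" "s = Suc (Suc r)"
        using s(2) by (auto simp: add_mset_eq_single)
      then show ?thesis
        using B by simp
    next
      assume "size (add_mset (s - 1) B') = 2 \<and> sum_mset (add_mset (s - 1) B') = Suc r
          \<and> 0 \<notin># add_mset (s - 1) B'"
      then show ?thesis
        using B s(2) False by auto
    qed
  qed
qed

lemma uux_derivative_shape_Dtot_pair:
  assumes "uux_derivative_shape r T"
  shows "Dtot T {#1, Suc r#} x = pair_coeff (Suc r)"
proof (cases "r = 0")
  case True
  then show ?thesis
    using assms by (simp add: Dtot_eq dpartial_0 deriv_uux_derivative_shape pair_coeff_def)
next
  case False
  have "set_mset {#1, Suc r#} - {0} = {1, Suc r}"
    by auto
  then have "Dtot T {#1, Suc r#} x = dpartial 0 T {#Suc r#} x + dpartial r T {#1#} x"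
    using False by (simp add: Dtot_eq)
  also have "\<dots> = 1 + real (count {#1#} r + 1) * T {#1, r#} x"
    using False by (simp add: dpartial_0 dpartial_pos deriv_uux_derivative_shape[OF assms]
        add_mset_commute)
  finally show ?thesis
    using assms False by (simp add: uux_derivative_shape_def pair_coeff_def)
qed

lemma uux_derivative_shape_Dtot:
  "uux_derivative_shape r T \<Longrightarrow> uux_derivative_shape (Suc r) (Dtot T)"
  using uux_derivative_shape_Dtot_top uux_derivative_shape_Dtot_const
    uux_derivative_shape_Dtot_support uux_derivative_shape_Dtot_pair
  unfolding uux_derivative_shape_def[of "Suc r"] by blast

lemma uux_derivative_shape_Dtot_power: "uux_derivative_shape r ((Dtot ^^ r) uux)"
proof (induction r)
  case 0
  show ?case
    unfolding uux_derivative_shape_def dmonom_def by auto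
qed (simp add: uux_derivative_shape_Dtot)

lemma dpartial_mult_Dtot_power_uux_eq_0:
  assumes max_count: "\<And>N'. count M0 1 < count N' 1 \<Longrightarrow> P N' = (\<lambda>_. 0)"
    and A: "A \<subseteq># add_mset 1 M0"
    and not_top: "\<not> (Suc r \<in># add_mset 1 M0 \<and> A = add_mset 1 M0 - {#Suc r#})"
    and not_pair: "\<not> (1 \<le> r \<and> r \<in># M0 \<and> A = M0 - {#r#})"
  shows "dpartial r P A x * (Dtot ^^ r) uux (add_mset 1 M0 - A) x = 0"
proof (rule ccontr)
  let ?N = "add_mset 1 M0"
  assume "dpartial r P A x * (Dtot ^^ r) uux (?N - A) x \<noteq> 0"
  then have "dpartial r P A x \<noteq> 0" and "(Dtot ^^ r) uux (?N - A) x \<noteq> 0"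
    by auto
  then have "?N - A = {#Suc r#} \<or> (size (?N - A) = 2 \<and> sum_mset (?N - A) = Suc r \<and> 0 \<notin># ?N - A)"
    using uux_derivative_shape_Dtot_power[of r] unfolding uux_derivative_shape_def by blast
  then show False
  proof
    assume "?N - A = {#Suc r#}"
    then have "?N = add_mset (Suc r) A"
      using subset_mset_diff_eq_iff[OF A, of "{#Suc r#}"] by simp
    then have "Suc r \<in># ?N" "A = ?N - {#Suc r#}"
      by simp_all
    with not_top show False
      by blast
  next
    assume pair: "size (?N - A) = 2 \<and> sum_mset (?N - A) = Suc r \<and> 0 \<notin># ?N - A"
    then obtain j l where "?N - A = {#j, l#}"
      by (auto elim: multiset_size_2E)
    with pair have jl: "?N = A + {#j, l#}" "j \<noteq> 0" "l \<noteq> 0" "j + l = Suc r"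
      using subset_mset_diff_eq_iff[OF A, of "{#j, l#}"] by auto
    show False
    proof (cases "j = 1 \<or> l = 1")
      case True
      then have "M0 = add_mset r A" "1 \<le> r"
        using jl by (auto simp: add_mset_commute)
      with not_pair show False
        by simp
    next
      case False
      (* if neither of j, l is 1, the monomial A u_r has one factor u_x more than M0 *)
      then have "2 \<le> r" and "count (add_mset r A) 1 = Suc (count M0 1)"
        using jl by (auto simp: count_add_mset dest: arg_cong[of _ _ "\<lambda>M. count M 1"])
      with max_count have "P (add_mset r A) = (\<lambda>_. 0)"
        by simp
      with \<open>dpartial r P A x \<noteq> 0\<close> \<open>2 \<le> r\<close> show False
        by (simp add: dpartial_pos)
    qed
  qed
qed

lemma Dtot_power_uux_single: "(Dtot ^^ r) uux {#Suc r#} = (\<lambda>u. u)"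
  using uux_derivative_shape_Dtot_power[of r] unfolding uux_derivative_shape_def by blast

lemma Dtot_power_uux_pair: "1 \<le> r \<Longrightarrow> (Dtot ^^ r) uux {#1, r#} x = pair_coeff r"
  using uux_derivative_shape_Dtot_power[of r] unfolding uux_derivative_shape_def by blast

lemma dmult_Dtot_power_uux_at_max:
  assumes max_count: "\<And>N'. count M0 1 < count N' 1 \<Longrightarrow> P N' = (\<lambda>_. 0)"
  shows "dmult (dpartial r P) ((Dtot ^^ r) uux) (add_mset 1 M0) x =
      (if Suc r \<in># add_mset 1 M0 then dpartial r P (add_mset 1 M0 - {#Suc r#}) x * x else 0)
    + (if 1 \<le> r \<and> r \<in># M0 then real (count M0 r) * pair_coeff r * P M0 x else 0)"
proof -
  let ?N = "add_mset 1 M0"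
  define h where "h A = dpartial r P A x * (Dtot ^^ r) uux (?N - A) x" for A
  define top where "top A \<longleftrightarrow> Suc r \<in># ?N \<and> A = ?N - {#Suc r#}" for A
  define pair where "pair A \<longleftrightarrow> 1 \<le> r \<and> r \<in># M0 \<and> A = M0 - {#r#}" for A
  have "\<not> (top A \<and> pair A)" for A
    unfolding top_def pair_def by (auto dest: arg_cong[of _ _ size] simp: size_Diff_singleton)
  then have split: "h A = (if top A then h A else 0) + (if pair A then h A else 0)"
    if "A \<subseteq># ?N" for A
    using dpartial_mult_Dtot_power_uux_eq_0[OF max_count that, where r = r and x = x]
    unfolding h_def top_def pair_def by auto
  have "dmult (dpartial r P) ((Dtot ^^ r) uux) ?N x
      = (\<Sum>A | A \<subseteq># ?N. if top A then h A else 0) + (\<Sum>A | A \<subseteq># ?N. if pair A then h A else 0)"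
    unfolding dmult_def h_def[symmetric] sum.distrib[symmetric]
    by (rule sum.cong[OF refl]) (rule split, simp)
  also have "(\<Sum>A | A \<subseteq># ?N. if top A then h A else 0)
      = (if Suc r \<in># ?N then dpartial r P (?N - {#Suc r#}) x * x else 0)"
  proof (cases "Suc r \<in># ?N")
    case True
    then have "?N - (?N - {#Suc r#}) = {#Suc r#}"
      by (metis add_diff_cancel_left' insert_DiffM2)
    with True show ?thesis
      using finite_submultisets[of ?N]
      by (simp add: top_def h_def sum.delta' Dtot_power_uux_single del: One_nat_def)
  qed (simp add: top_def)
  also have "(\<Sum>A | A \<subseteq># ?N. if pair A then h A else 0)
      = (if 1 \<le> r \<and> r \<in># M0 then real (count M0 r) * pair_coeff r * P M0 x else 0)"
  proof (cases "1 \<le> r \<and> r \<in># M0")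
    case True
    then obtain M' where M0: "M0 = add_mset r M'"
      by (metis insert_DiffM)
    then have "?N - M' = {#1, r#}"
      by simp
    with True have "h M' = real (count M0 r) * pair_coeff r * P M0 x"
      using Dtot_power_uux_pair[of r x] by (simp add: h_def M0 dpartial_pos add_mset_commute)
    with True show ?thesis
      using finite_submultisets[of ?N] by (simp add: pair_def M0 sum.delta')
  next
    case False
    then have "\<not> pair A" for A
      unfolding pair_def by blast
    then show ?thesis
      unfolding if_not_P[OF False] by simp
  qed
  finally show ?thesis .
qed

lemma frechet_right_uux_at_max:
  assumes fin: "finite {M. P M \<noteq> (\<lambda>_. 0)}" and "0 \<notin># M0"
    and max_count: "\<And>N'. count M0 1 < count N' 1 \<Longrightarrow> P N' = (\<lambda>_. 0)"
  shows "frechet P uux (add_mset 1 M0) x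
    = x * Dtot P (add_mset 1 M0) x + (\<Sum>k\<in>#M0. pair_coeff k) * P M0 x"
proof -
  let ?N = "add_mset 1 M0"
  obtain B0 where B0: "\<And>r. B0 < r \<Longrightarrow> dpartial r P = dzero"
    using dpartial_eventually_dzero[OF fin] by blast
  define B where "B = max B0 (Max (set_mset ?N))"
  have N_le: "s \<le> B" if "s \<in># ?N" for s
    using that unfolding B_def by (simp add: le_max_iff_disj)
  have "frechet P uux ?N x = (\<Sum>r\<le>B. dmult (dpartial r P) ((Dtot ^^ r) uux) ?N x)"
    using B0 unfolding B_def by (intro frechet_eq_sum_atMost) simp
  also have "\<dots> = (\<Sum>r\<le>B. if Suc r \<in># ?N then dpartial r P (?N - {#Suc r#}) x * x else 0)
      + (\<Sum>r\<le>B. real (count M0 r) * (pair_coeff r * P M0 x))"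
  proof -
    have "(if 1 \<le> r \<and> r \<in># M0 then real (count M0 r) * pair_coeff r * P M0 x else 0)
        = real (count M0 r) * (pair_coeff r * P M0 x)" for r
      using \<open>0 \<notin># M0\<close> by (cases "r = 0") (auto simp: not_in_iff)
    then show ?thesis
      by (simp only: dmult_Dtot_power_uux_at_max[OF max_count] sum.distrib)
  qed
  also have "(\<Sum>r\<le>B. if Suc r \<in># ?N then dpartial r P (?N - {#Suc r#}) x * x else 0)
      = x * Dtot P ?N x"
  proof -
    have "Dtot P ?N x = (\<Sum>r\<le>B. if Suc r \<in># ?N then dpartial r P (?N - {#Suc r#}) x else 0)"
      using N_le by (intro Dtot_eq_sum_atMost) (simp add: le_SucI)
    moreover have "x * (if c then d else 0) = (if c then d * x else 0)" for c and d :: real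
      by simp
    ultimately show ?thesis
      by (simp only: sum_distrib_left)
  qed
  also have "(\<Sum>r\<le>B. real (count M0 r) * (pair_coeff r * P M0 x))
      = (\<Sum>k\<in>#M0. pair_coeff k) * P M0 x"
    using N_le by (subst sum_atMost_count_eq_sum_mset) (auto simp: sum_mset_distrib_right)
  finally show ?thesis .
qed

lemma lie_bracket_uux_eq_0_imp_dzero:
  assumes fin: "finite {M. P M \<noteq> (\<lambda>_. 0)}"
    and no_u: "\<And>M. P M \<noteq> (\<lambda>_. 0) \<Longrightarrow> 0 \<notin># M"
    and deg: "\<And>M. P M \<noteq> (\<lambda>_. 0) \<Longrightarrow> 2 \<le> sum_mset M"
    and commutes: "\<And>N x. lie_bracket uux P N x = 0"
  shows "P = dzero"
proof (rule ccontr)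
  let ?S = "{M. P M \<noteq> (\<lambda>_. 0)}"
  assume "P \<noteq> dzero"
  then have "?S \<noteq> {}"
    by (auto simp: dzero_def)
  have "Max ((\<lambda>M. count M 1) ` ?S) \<in> (\<lambda>M. count M 1) ` ?S"
    using fin \<open>?S \<noteq> {}\<close> by (intro Max_in) auto
  then obtain M0 where M0_max: "Max ((\<lambda>M. count M 1) ` ?S) = count M0 1" and "M0 \<in> ?S"
    by blast
  have max_count: "P N' = (\<lambda>_. 0)" if "count M0 1 < count N' 1" for N'
  proof (rule ccontr)
    assume "P N' \<noteq> (\<lambda>_. 0)"
    then have "count N' 1 \<le> count M0 1"
      using fin unfolding M0_max[symmetric] by (intro Max_ge) auto
    with that show False
      by simp
  qed
  from \<open>M0 \<in> ?S\<close> obtain x where x: "P M0 x \<noteq> 0"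
    by auto
  have "(\<Sum>k\<in>#M0. real k) \<le> (\<Sum>k\<in>#M0. pair_coeff k)"
    by (rule sum_mset_mono) (simp add: pair_coeff_def)
  moreover have "2 \<le> (\<Sum>k\<in>#M0. real k)"
    using deg \<open>M0 \<in> ?S\<close> by (simp flip: of_nat_sum_mset)
  moreover have "P M0 x = (\<Sum>k\<in>#M0. pair_coeff k) * P M0 x"
  proof -
    have "frechet uux P (add_mset 1 M0) x = frechet P uux (add_mset 1 M0) x"
      using commutes[of "add_mset 1 M0" x] by (simp add: lie_bracket_def)
    then show ?thesis
      using frechet_uux_left[of P "add_mset 1 M0" x]
        frechet_right_uux_at_max[OF fin no_u[OF \<open>M0 \<in> ?S\<close>[simplified]] max_count, of x]
      by simp
  qed
  ultimately show False
    using x by simp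
qed

section \<open>Uniqueness\<close>

(* The part of D of degree at least 2, except that coefficients need only be differentiable:
   this class is closed under differences and contains the coefficients of Q_beta without
   a product rule for C^infinity functions. *)
definition in_D_ge2 :: "dpoly \<Rightarrow> bool" where
  "in_D_ge2 P \<longleftrightarrow> finite {M. P M \<noteq> (\<lambda>_. 0)} \<and> (\<forall>M x. P M differentiable at x)
    \<and> (\<forall>M. P M \<noteq> (\<lambda>_. 0) \<longrightarrow> 0 \<notin># M \<and> 2 \<le> sum_mset M)"

lemma in_D_ge2_diff:
  assumes "in_D_ge2 P1" "in_D_ge2 P2"
  shows "in_D_ge2 (\<lambda>N x. P1 N x - P2 N x)"
proof -
  have supp: "P1 M \<noteq> (\<lambda>_. 0) \<or> P2 M \<noteq> (\<lambda>_. 0)" if "(\<lambda>x. P1 M x - P2 M x) \<noteq> (\<lambda>_. 0)" for M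
    using that by auto
  then have "{M. (\<lambda>x. P1 M x - P2 M x) \<noteq> (\<lambda>_. 0)} \<subseteq> {M. P1 M \<noteq> (\<lambda>_. 0)} \<union> {M. P2 M \<noteq> (\<lambda>_. 0)}"
    by blast
  with assms show ?thesis
    unfolding in_D_ge2_def by (auto dest!: supp intro: finite_subset differentiable_diff)
qed

lemma in_D_ge2_dzero: "in_D_ge2 dzero"
  by (simp add: in_D_ge2_def dzero_def)

lemma in_D_ge2_ux_monom:
  assumes "2 \<le> k" "\<And>x. c differentiable at x"
  shows "in_D_ge2 (ux_monom c k)"
proof -
  have "{M. ux_monom c k M \<noteq> (\<lambda>_. 0)} \<subseteq> {replicate_mset k 1}"
    by (auto simp: dmonom_def)
  with assms show ?thesis
    unfolding in_D_ge2_def by (auto simp: dmonom_def intro: finite_subset)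
qed

lemma in_Dk_imp_in_D_ge2: "2 \<le> k \<Longrightarrow> in_Dk k P \<Longrightarrow> in_D_ge2 P"
  unfolding in_Dk_def in_D_def in_D_ge2_def
  using C_inf_differentiable[where n = 0] by auto

lemma lie_bracket_uux_diff:
  assumes "in_D_ge2 P1" "in_D_ge2 P2"
  shows "lie_bracket uux (\<lambda>N x. P1 N x - P2 N x) N x
    = lie_bracket uux P1 N x - lie_bracket uux P2 N x"
proof -
  have diff: "\<And>N x. P1 N differentiable at x" "\<And>N x. P2 N differentiable at x"
    using assms unfolding in_D_ge2_def by blast+
  obtain B1 where B1: "\<And>r. B1 < r \<Longrightarrow> dpartial r P1 = dzero"
    using assms(1) dpartial_eventually_dzero unfolding in_D_ge2_def by blast
  obtain B2 where B2: "\<And>r. B2 < r \<Longrightarrow> dpartial r P2 = dzero"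
    using assms(2) dpartial_eventually_dzero unfolding in_D_ge2_def by blast
  have "frechet (\<lambda>N x. P1 N x - P2 N x) uux N x = frechet P1 uux N x - frechet P2 uux N x"
    using B1 B2 by (intro frechet_diff_left[OF diff, of "max B1 B2"]) auto
  moreover have "frechet uux (\<lambda>N x. P1 N x - P2 N x) N x = frechet uux P1 N x - frechet uux P2 N x"
    unfolding frechet_uux_left Dtot_diff[OF diff] by (simp add: algebra_simps)
  ultimately show ?thesis
    unfolding lie_bracket_def by simp
qed

lemma formal_symmetry_KK_unique:
  assumes "formal_symmetry (KK a) Q" "formal_symmetry (KK a) Q'" "Q 0 = Q' 0"
    and "\<And>m. 1 \<le> m \<Longrightarrow> in_D_ge2 (Q m)" "\<And>m. 1 \<le> m \<Longrightarrow> in_D_ge2 (Q' m)"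
  shows "Q = Q'"
proof
  fix m
  show "Q m = Q' m"
  proof (induction m rule: less_induct)
    case (less m)
    show ?case
    proof (cases "m = 0")
      case False
      have "2 \<le> m \<Longrightarrow> Q (m - 2) = Q' (m - 2)"
        using less.IH by simp
      then have tail: "(if 2 \<le> m then lie_bracket (ux_monom a 3) (Q (m - 2)) N x else 0)
          = (if 2 \<le> m then lie_bracket (ux_monom a 3) (Q' (m - 2)) N x else 0)" for N x
        by simp
      have order_m:
        "lie_bracket uux (Q m) N x
          + (if 2 \<le> m then lie_bracket (ux_monom a 3) (Q (m - 2)) N x else 0) = 0"
        "lie_bracket uux (Q' m) N x
          + (if 2 \<le> m then lie_bracket (ux_monom a 3) (Q' (m - 2)) N x else 0) = 0"
        for N x
        using assms(1,2) unfolding formal_symmetry_KK_iff by blast+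
      have "lie_bracket uux (Q m) N x - lie_bracket uux (Q' m) N x = 0" for N x
        using tail[of N x] order_m[of N x] by linarith
      moreover have "in_D_ge2 (Q m)" "in_D_ge2 (Q' m)"
        using False assms(4,5) by simp_all
      ultimately have "lie_bracket uux (\<lambda>N x. Q m N x - Q' m N x) N x = 0" for N x
        using lie_bracket_uux_diff[of "Q m" "Q' m" N x] by simp
      moreover have "in_D_ge2 (\<lambda>N x. Q m N x - Q' m N x)"
        using \<open>in_D_ge2 (Q m)\<close> \<open>in_D_ge2 (Q' m)\<close> by (rule in_D_ge2_diff)
      ultimately have "(\<lambda>N x. Q m N x - Q' m N x) = dzero"
        by (intro lie_bracket_uux_eq_0_imp_dzero) (auto simp: in_D_ge2_def)
      then show ?thesis
        by (auto simp: dzero_def fun_eq_iff)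
    qed (use assms(3) in simp)
  qed
qed

lemma in_D_ge2_Qb:
  assumes "C_inf a" "C_inf b" "1 \<le> m"
  shows "in_D_ge2 (Qb a b m)"
proof (cases "even m")
  case True
  then obtain n where "m = 2 * n" "1 \<le> n"
    using assms(3) by (metis evenE mult_eq_0_iff not_one_le_zero One_nat_def Suc_leI neq0_conv)
  moreover have "symmetry_coeff a b n differentiable at x" for x
    using has_real_derivative_symmetry_coeff C_inf_differentiable[OF assms(1), of 0]
      C_inf_differentiable[OF assms(2)]
    by (fastforce simp: real_differentiable_def)
  ultimately show ?thesis
    using in_D_ge2_ux_monom[of "2 * n + 1" "symmetry_coeff a b n"] by (simp add: Qb_even)
qed (simp add: Qb_odd in_D_ge2_dzero)

theorem mainTheorem6:
  fixes a b :: "real \<Rightarrow> real"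
  assumes "C_inf a" and "C_inf b"
  shows "formal_symmetry (KK a) (Qb a b)
    \<and> (\<forall>c :: nat \<Rightarrow> real \<Rightarrow> real.
          (c 0 = b \<and> (\<forall>n\<ge>1. \<forall>x. real n * c n x
              = (1 - real n) * deriv a x * c (n - 1) x + a x * deriv (c (n - 1)) x))
          \<longleftrightarrow> c = (\<lambda>n x. a x ^ n * (deriv ^^ n) b x / fact n))
    \<and> (\<forall>Q :: fseries.
          (\<forall>n. in_Dk (2 * n + 1) (Q (2 * n))) \<and> (\<forall>n. Q (2 * n + 1) = dzero)
          \<and> Q 0 = dmonom b {#1#} \<and> formal_symmetry (KK a) Q
          \<longrightarrow> Q = Qb a b)"
proof (intro conjI allI impI)
  show symmetry: "formal_symmetry (KK a) (Qb a b)"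
    using assms by (rule formal_symmetry_Qb)
  have "(\<lambda>n x. a x ^ n * (deriv ^^ n) b x / fact n) = symmetry_coeff a b"
    by (intro ext) (simp add: symmetry_coeff_def)
  then show "(c 0 = b \<and> (\<forall>n\<ge>1. \<forall>x. real n * c n x
      = (1 - real n) * deriv a x * c (n - 1) x + a x * deriv (c (n - 1)) x))
    \<longleftrightarrow> c = (\<lambda>n x. a x ^ n * (deriv ^^ n) b x / fact n)" for c
    using symmetry_coeff_unique_solution[OF assms] by simp
  fix Q :: fseries
  assume Q: "(\<forall>n. in_Dk (2 * n + 1) (Q (2 * n))) \<and> (\<forall>n. Q (2 * n + 1) = dzero)
    \<and> Q 0 = dmonom b {#1#} \<and> formal_symmetry (KK a) Q"
  have "in_D_ge2 (Q m)" if "1 \<le> m" for m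
  proof (cases "even m")
    case True
    with that obtain n where "m = 2 * n" "1 \<le> n"
      by (auto elim!: evenE)
    with Q show ?thesis
      by (auto intro: in_Dk_imp_in_D_ge2[of "2 * n + 1"])
  qed (use Q in \<open>auto elim!: oddE simp: in_D_ge2_dzero\<close>)
  moreover have "Q 0 = Qb a b 0"
    using Q by (simp add: Qb_def)
  ultimately show "Q = Qb a b"
    using Q symmetry assms by (intro formal_symmetry_KK_unique[of a]) (auto intro: in_D_ge2_Qb)
qed

end
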